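(* Let $m\in\mathbb{Z}_{>0}$, let $V$ be an irreducible $\mathcal{G}^{(m,0)}$-module, and suppose there is an odd integer $k\ge m-1$ such that $L_{k+j}v=H_{k+j}v=I_{k+j}v=J_{k+j}v=0$ for all $v\in V$, $j\in\mathbb{Z}_{>0}$, and $I_{k-i}v=\alpha_{k-i}v$, $J_{k-i}v=\beta_{k-i}v$ for all $v\in V$, $0\le i\le m-1$, with $\alpha_{k-i},\beta_{k-i}\in\mathbb{C}$ and $\alpha_k\beta_k\neq0$. Let $V_0=\mathrm{Ind}_{\mathcal{G}^{(m,0)}}^{\mathcal{G}_0}V$, let $v\in V_0\setminus V$ (where $V$ is identified with $1\otimes V$) and let $\deg(v)=(\mathbf{h},\mathbf{l})$. Then: (1) If $\mathbf{h}\ne\mathbf{0}$ and $r=\min\{i:h_i\ne0\}$, then $\deg\big((I_{k-r}-\alpha_{k-r})v\big)=(\mathbf{h}-\epsilon_r,\mathbf{l})$. (2) If $\mathbf{h}=\mathbf{0}$, $\mathbf{l}\ne\mathbf{0}$ and $s=\max\{i:l_i\ne0\}$, then $\deg\big((I_{k-s}-\alpha_{k-s})v\big)=(\mathbf{0},\mathbf{l}-\epsilon_s)$ or $\deg\big((J_{k-s}-\beta_{k-s})v\big)=(\mathbf{0},\mathbf{l}-\epsilon_s)$.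
   Context: $\mathcal{G}$ is the complex Lie algebra with basis $\{L_n,H_n,I_n,J_n,\mathbf{c}_1,\mathbf{c}_2,\mathbf{c}_3: n\in\mathbb{Z}\}$ whose brackets of basis elements are $[L_m,L_n]=(n-m)L_{m+n}+\frac{m^3-m}{12}\delta_{m+n,0}\mathbf{c}_1$, $[L_m,H_n]=nH_{m+n}+m^2\delta_{m+n,0}\mathbf{c}_2$, $[H_m,H_n]=m\delta_{m+n,0}\mathbf{c}_3$, $[L_m,I_n]=(n-m)I_{m+n}$, $[L_m,J_n]=(n-m)J_{m+n}$, $[H_m,I_n]=I_{m+n}$, $[H_m,J_n]=-J_{m+n}$ (and antisymmetric counterparts), all other brackets of basis elements zero. $\mathcal{G}^{(m,0)}=\sum_{i\ge0}(\mathbb{C}L_{m+i}+\mathbb{C}H_{m+i}+\mathbb{C}I_{i}+\mathbb{C}J_{i})+\sum_{k=1}^3\mathbb{C}\mathbf{c}_k$, $\mathcal{G}_0=\sum_{i\ge0}(\mathbb{C}L_{i}+\mathbb{C}H_{i}+\mathbb{C}I_{i}+\mathbb{C}J_{i})+\sum_{k=1}^3\mathbb{C}\mathbf{c}_k$, and $V_0=\mathcal{U}(\mathcal{G}_0)\otimes_{\mathcal{U}(\mathcal{G}^{(m,0)})}V$. Orders and degree: elements of $\mathbb{N}^m$ are written $\mathbf{i}=(i_{m-1},\dots,i_1,i_0)$; $\epsilon_k$ has $1$ in the position of index $k$ and $0$ elsewhere; $\mathbf{w}(\mathbf{i})=\sum_{k=0}^{m-1}(m-k)i_k$. On $\mathbb{N}^m$,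 $\mathbf{i}\succ\mathbf{j}$ iff there is $k$ with $i_k>j_k$ and $i_s=j_s$ for all $s<k$. On $\mathbb{N}^m\times\mathbb{N}^m$, $(\mathbf{h},\mathbf{l})\succ(\mathbf{h}',\mathbf{l}')$ iff either $\mathbf{w}(\mathbf{h})+\mathbf{w}(\mathbf{l})>\mathbf{w}(\mathbf{h}')+\mathbf{w}(\mathbf{l}')$, or these weights are equal and $\mathbf{l}\succ\mathbf{l}'$, or the weights are equal, $\mathbf{l}=\mathbf{l}'$ and $\mathbf{h}\succ\mathbf{h}'$. Set $H^{\mathbf{h}}L^{\mathbf{l}}=H_{m-1}^{h_{m-1}}\cdots H_0^{h_0}L_{m-1}^{l_{m-1}}\cdots L_0^{l_0}$. By PBW every $v\in V_0$ is uniquely $\sum_{\mathbf{h},\mathbf{l}}H^{\mathbf{h}}L^{\mathbf{l}}v_{\mathbf{h},\mathbf{l}}$ with $v_{\mathbf{h},\mathbf{l}}\in V$, finitely many nonzero; for $v\neq0$, $\deg(v)$ is the $\succ$-maximal $(\mathbf{h},\mathbf{l})$ with $v_{\mathbf{h},\mathbf{l}}\ne0$. *)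

theory Defs
  imports Complex_Main
begin

datatype gb = Lb int | Hb int | Ib int | Jb int | C1 | C2 | C3

fun in_Gm0 :: "nat \<Rightarrow> gb \<Rightarrow> bool" where
  "in_Gm0 m (Lb n) = (n \<ge> int m)"
| "in_Gm0 m (Hb n) = (n \<ge> int m)"
| "in_Gm0 m (Ib n) = (n \<ge> 0)"
| "in_Gm0 m (Jb n) = (n \<ge> 0)"
| "in_Gm0 m _ = True"

fun in_G0 :: "gb \<Rightarrow> bool" where
  "in_G0 (Lb n) = (n \<ge> 0)"
| "in_G0 (Hb n) = (n \<ge> 0)"
| "in_G0 (Ib n) = (n \<ge> 0)"
| "in_G0 (Jb n) = (n \<ge> 0)"
| "in_G0 _ = True"

text \<open>Action of the bracket [x,y] of two basis elements on a vector, given the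
  action rho of basis elements and the scalar multiplication sc.\<close>
fun brk_act :: "(complex \<Rightarrow> 'v \<Rightarrow> 'v) \<Rightarrow> (gb \<Rightarrow> 'v \<Rightarrow> 'v) \<Rightarrow> gb \<Rightarrow> gb \<Rightarrow> 'v \<Rightarrow> 'v::ab_group_add" where
  "brk_act sc \<rho> (Lb a) (Lb b) v = sc (of_int (b - a)) (\<rho> (Lb (a + b)) v)
      + (if a + b = 0 then sc (of_int (a^3 - a) / 12) (\<rho> C1 v) else 0)"
| "brk_act sc \<rho> (Lb a) (Hb b) v = sc (of_int b) (\<rho> (Hb (a + b)) v)
      + (if a + b = 0 then sc (of_int (a^2)) (\<rho> C2 v) else 0)"
| "brk_act sc \<rho> (Hb b) (Lb a) v = - (sc (of_int b) (\<rho> (Hb (a + b)) v)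
      + (if a + b = 0 then sc (of_int (a^2)) (\<rho> C2 v) else 0))"
| "brk_act sc \<rho> (Hb a) (Hb b) v = (if a + b = 0 then sc (of_int a) (\<rho> C3 v) else 0)"
| "brk_act sc \<rho> (Lb a) (Ib b) v = sc (of_int (b - a)) (\<rho> (Ib (a + b)) v)"
| "brk_act sc \<rho> (Ib b) (Lb a) v = - sc (of_int (b - a)) (\<rho> (Ib (a + b)) v)"
| "brk_act sc \<rho> (Lb a) (Jb b) v = sc (of_int (b - a)) (\<rho> (Jb (a + b)) v)"
| "brk_act sc \<rho> (Jb b) (Lb a) v = - sc (of_int (b - a)) (\<rho> (Jb (a + b)) v)"
| "brk_act sc \<rho> (Hb a) (Ib b) v = \<rho> (Ib (a + b)) v"
| "brk_act sc \<rho> (Ib b) (Hb a) v = - \<rho> (Ib (a + b)) v"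
| "brk_act sc \<rho> (Hb a) (Jb b) v = - \<rho> (Jb (a + b)) v"
| "brk_act sc \<rho> (Jb b) (Hb a) v = \<rho> (Jb (a + b)) v"
| "brk_act sc \<rho> x y v = 0"

text \<open>rho is a representation (module structure) of the subalgebra spanned by the
  basis elements satisfying S, on the complex vector space with scalar multiplication sc.\<close>
definition is_rep :: "(complex \<Rightarrow> 'v::ab_group_add \<Rightarrow> 'v) \<Rightarrow> (gb \<Rightarrow> bool) \<Rightarrow> (gb \<Rightarrow> 'v \<Rightarrow> 'v) \<Rightarrow> bool" where
  "is_rep sc S \<rho> \<longleftrightarrow> vector_space sc
     \<and> (\<forall>x. S x \<longrightarrow> Vector_Spaces.linear sc sc (\<rho> x))
     \<and> (\<forall>x y v. S x \<and> S y \<longrightarrow> \<rho> x (\<rho> y v) - \<rho> y (\<rho> x v) = brk_act sc \<rho> x y v)"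

definition irreducible_rep :: "(complex \<Rightarrow> 'v::ab_group_add \<Rightarrow> 'v) \<Rightarrow> (gb \<Rightarrow> bool) \<Rightarrow> (gb \<Rightarrow> 'v \<Rightarrow> 'v) \<Rightarrow> bool" where
  "irreducible_rep sc S \<rho> \<longleftrightarrow> is_rep sc S \<rho> \<and> (\<exists>u::'v. u \<noteq> 0)
     \<and> (\<forall>U. module.subspace sc U \<and> (\<forall>x u. S x \<and> u \<in> U \<longrightarrow> \<rho> x u \<in> U)
            \<longrightarrow> U = {0} \<or> U = UNIV)"

text \<open>N^m, realised as functions nat => nat vanishing from index m on;
  i = (i_{m-1},...,i_0) corresponds to the function k |-> i_k.\<close>
definition NM :: "nat \<Rightarrow> (nat \<Rightarrow> nat) set" where
  "NM m = {f. \<forall>i\<ge>m. f i = 0}"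

fun monH :: "(gb \<Rightarrow> 'w \<Rightarrow> 'w) \<Rightarrow> nat \<Rightarrow> (nat \<Rightarrow> nat) \<Rightarrow> 'w \<Rightarrow> 'w" where
  "monH \<sigma> 0 h = id"
| "monH \<sigma> (Suc n) h = (\<sigma> (Hb (int n)) ^^ h n) \<circ> monH \<sigma> n h"

fun monL :: "(gb \<Rightarrow> 'w \<Rightarrow> 'w) \<Rightarrow> nat \<Rightarrow> (nat \<Rightarrow> nat) \<Rightarrow> 'w \<Rightarrow> 'w" where
  "monL \<sigma> 0 l = id"
| "monL \<sigma> (Suc n) l = (\<sigma> (Lb (int n)) ^^ l n) \<circ> monL \<sigma> n l"

definition mon :: "(gb \<Rightarrow> 'w \<Rightarrow> 'w) \<Rightarrow> nat \<Rightarrow> (nat \<Rightarrow> nat) \<Rightarrow> (nat \<Rightarrow> nat) \<Rightarrow> 'w \<Rightarrow> 'w" where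
  "mon \<sigma> m h l = monH \<sigma> m h \<circ> monL \<sigma> m l"

definition pbw_sum :: "(gb \<Rightarrow> 'w \<Rightarrow> 'w) \<Rightarrow> ('v \<Rightarrow> 'w) \<Rightarrow> nat
    \<Rightarrow> ((nat \<Rightarrow> nat) \<times> (nat \<Rightarrow> nat) \<Rightarrow> 'v::zero) \<Rightarrow> 'w::comm_monoid_add" where
  "pbw_sum \<sigma> \<iota> m c = (\<Sum>p\<in>{p. c p \<noteq> 0}. mon \<sigma> m (fst p) (snd p) (\<iota> (c p)))"

definition pbw_family :: "nat \<Rightarrow> ((nat \<Rightarrow> nat) \<times> (nat \<Rightarrow> nat) \<Rightarrow> 'v::zero) \<Rightarrow> bool" where
  "pbw_family m c \<longleftrightarrow> finite {p. c p \<noteq> 0} \<and> {p. c p \<noteq> 0} \<subseteq> NM m \<times> NM m"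

definition pbw_basis :: "(gb \<Rightarrow> 'w \<Rightarrow> 'w) \<Rightarrow> ('v::zero \<Rightarrow> 'w::comm_monoid_add) \<Rightarrow> nat \<Rightarrow> bool" where
  "pbw_basis \<sigma> \<iota> m \<longleftrightarrow> (\<forall>w. \<exists>!c. pbw_family m c \<and> w = pbw_sum \<sigma> \<iota> m c)"

definition pbw_coeff :: "(gb \<Rightarrow> 'w \<Rightarrow> 'w) \<Rightarrow> ('v::zero \<Rightarrow> 'w::comm_monoid_add) \<Rightarrow> nat \<Rightarrow> 'w
    \<Rightarrow> (nat \<Rightarrow> nat) \<times> (nat \<Rightarrow> nat) \<Rightarrow> 'v" where
  "pbw_coeff \<sigma> \<iota> m w = (THE c. pbw_family m c \<and> w = pbw_sum \<sigma> \<iota> m c)"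

text \<open>(W, sigma, iota) is the induced module Ind_{G^(m,0)}^{G_0} V = U(G_0) (x) V, with
  iota : V -> V_0, v |-> 1 (x) v: W is a G_0-module, iota is a G^(m,0)-module map, and
  the PBW map (finitely supported families) -> W is bijective.\<close>
definition induced_module :: "nat \<Rightarrow> (complex \<Rightarrow> 'v \<Rightarrow> 'v) \<Rightarrow> (gb \<Rightarrow> 'v \<Rightarrow> 'v)
    \<Rightarrow> (complex \<Rightarrow> 'w \<Rightarrow> 'w) \<Rightarrow> (gb \<Rightarrow> 'w \<Rightarrow> 'w) \<Rightarrow> ('v::ab_group_add \<Rightarrow> 'w::ab_group_add) \<Rightarrow> bool" where
  "induced_module m sV \<rho> sW \<sigma> \<iota> \<longleftrightarrow> is_rep sW in_G0 \<sigma>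
     \<and> Vector_Spaces.linear sV sW \<iota>
     \<and> (\<forall>x u. in_Gm0 m x \<longrightarrow> \<iota> (\<rho> x u) = \<sigma> x (\<iota> u))
     \<and> pbw_basis \<sigma> \<iota> m"

definition wt :: "nat \<Rightarrow> (nat \<Rightarrow> nat) \<Rightarrow> nat" where
  "wt m i = (\<Sum>k<m. (m - k) * i k)"

definition lexgt :: "nat \<Rightarrow> (nat \<Rightarrow> nat) \<Rightarrow> (nat \<Rightarrow> nat) \<Rightarrow> bool" where
  "lexgt m i j \<longleftrightarrow> (\<exists>k<m. i k > j k \<and> (\<forall>s<k. i s = j s))"

definition pairgt :: "nat \<Rightarrow> (nat \<Rightarrow> nat) \<times> (nat \<Rightarrow> nat) \<Rightarrow> (nat \<Rightarrow> nat) \<times> (nat \<Rightarrow> nat) \<Rightarrow> bool" where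
  "pairgt m p q \<longleftrightarrow>
     wt m (fst p) + wt m (snd p) > wt m (fst q) + wt m (snd q)
   \<or> (wt m (fst p) + wt m (snd p) = wt m (fst q) + wt m (snd q) \<and> lexgt m (snd p) (snd q))
   \<or> (wt m (fst p) + wt m (snd p) = wt m (fst q) + wt m (snd q) \<and> snd p = snd q
        \<and> lexgt m (fst p) (fst q))"

definition has_deg :: "(gb \<Rightarrow> 'w \<Rightarrow> 'w) \<Rightarrow> ('v::zero \<Rightarrow> 'w::comm_monoid_add) \<Rightarrow> nat \<Rightarrow> 'w
    \<Rightarrow> (nat \<Rightarrow> nat) \<times> (nat \<Rightarrow> nat) \<Rightarrow> bool" where
  "has_deg \<sigma> \<iota> m w p \<longleftrightarrow> pbw_coeff \<sigma> \<iota> m w p \<noteq> 0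
     \<and> (\<forall>q. pbw_coeff \<sigma> \<iota> m w q \<noteq> 0 \<longrightarrow> q \<noteq> p \<longrightarrow> pairgt m p q)"

end

theory Submission
  imports Defs "HOL-Library.Sublist"
begin

text \<open>Write \<open>X\<close> for \<open>I\<close> or \<open>J\<close>: \<open>[H\<^sub>i, X\<^sub>b] = \<epsilon> X\<^sub>i\<^sub>+\<^sub>b\<close> with \<open>\<epsilon> = \<plusminus>1\<close>,
  \<open>[L\<^sub>i, X\<^sub>b] = (b - i) X\<^sub>i\<^sub>+\<^sub>b\<close>, and \<open>X\<^sub>k\<^sub>-\<^sub>r\<close> acts on \<open>V\<close> by a scalar \<open>\<gamma>\<^sub>k\<^sub>-\<^sub>r\<close>.
  Commuting \<open>X\<^sub>k\<^sub>-\<^sub>r\<close> through a word in the \<open>H\<^sub>i, L\<^sub>i\<close> (\<open>0 \<le> i < m\<close>) applied to \<open>V\<close>,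
  a letter of mode \<open>i\<close> produces \<open>X\<^sub>k\<^sub>-\<^sub>r\<^sub>+\<^sub>i\<close>: for \<open>i > r\<close> this kills \<open>V\<close>; for \<open>i < r\<close> it is
  again a scalar on \<open>V\<close>, and deleting the letter lowers the weight by more than \<open>m - r\<close>;
  for \<open>i = r\<close> it is \<open>X\<^sub>k\<close>, which acts by \<open>\<gamma>\<^sub>k \<noteq> 0\<close>. So, up to terms of weight below
  \<open>w(h) + w(l) - (m - r)\<close>, \<open>X\<^sub>k\<^sub>-\<^sub>r - \<gamma>\<^sub>k\<^sub>-\<^sub>r\<close> acts on \<open>H\<^sup>h L\<^sup>l u\<close> as
  \<open>-\<gamma>\<^sub>k (h\<^sub>r \<epsilon> H\<^sup>h\<^sup>-\<^sup>\<epsilon>\<^sup>r L\<^sup>l u + l\<^sub>r (k - 2r) H\<^sup>h L\<^sup>l\<^sup>-\<^sup>\<epsilon>\<^sup>r u)\<close>.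
  Hence at weight \<open>w(deg v) - (m - r)\<close> each PBW coefficient of \<open>(X\<^sub>k\<^sub>-\<^sub>r - \<gamma>\<^sub>k\<^sub>-\<^sub>r) v\<close>
  involves only two top-weight coefficients of \<open>v\<close>, and the order \<open>\<succ>\<close> picks out the
  claimed degree. In case (2) the coefficient at \<open>(0, l - \<epsilon>\<^sub>s)\<close> is \<open>-\<alpha>\<^sub>k (c\<^sub>1 + \<kappa> c\<^sub>0)\<close>
  for \<open>I\<close> and \<open>-\<beta>\<^sub>k (\<kappa> c\<^sub>0 - c\<^sub>1)\<close> for \<open>J\<close>, where \<open>c\<^sub>0 \<noteq> 0\<close> is the leading coefficient
  of \<open>v\<close> and \<open>\<kappa> = l\<^sub>s (k - 2s) \<noteq> 0\<close> because \<open>k\<close> is odd; the two cannot both vanish.\<close>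

section \<open>Words in the generators \<open>H\<^sub>i\<close> and \<open>L\<^sub>i\<close>\<close>

fun mode :: "gb \<Rightarrow> int" where
  "mode (Hb i) = i"
| "mode (Lb i) = i"
| "mode _ = 0"

definition HL_letters :: "nat \<Rightarrow> gb set" where
  "HL_letters m = {x. \<exists>i. 0 \<le> i \<and> i < int m \<and> (x = Hb i \<or> x = Lb i)}"

definition word_weight :: "nat \<Rightarrow> gb list \<Rightarrow> int" where
  "word_weight m ws = (\<Sum>x\<leftarrow>ws. int m - mode x)"

lemma word_weight_simps [simp]:
  "word_weight m [] = 0"
  "word_weight m (x # xs) = int m - mode x + word_weight m xs"
  "word_weight m (xs @ ys) = word_weight m xs + word_weight m ys"
  by (simp_all add: word_weight_def)

lemma HL_letters_in_G0: "x \<in> HL_letters m \<Longrightarrow> in_G0 x"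
  by (auto simp: HL_letters_def)

lemma mode_HL_letters: "x \<in> HL_letters m \<Longrightarrow> 0 \<le> mode x \<and> mode x < int m"
  by (auto simp: HL_letters_def)

fun letters :: "(int \<Rightarrow> gb) \<Rightarrow> nat \<Rightarrow> (nat \<Rightarrow> nat) \<Rightarrow> gb list" where
  "letters C 0 f = []"
| "letters C (Suc n) f = replicate (f n) (C (int n)) @ letters C n f"

definition pbw_word :: "nat \<Rightarrow> (nat \<Rightarrow> nat) \<times> (nat \<Rightarrow> nat) \<Rightarrow> gb list" where
  "pbw_word m p = letters Hb m (fst p) @ letters Lb m (snd p)"

lemma letters_cong: "(\<And>i. i < n \<Longrightarrow> f i = g i) \<Longrightarrow> letters C n f = letters C n g"
  by (induction n) auto

lemma set_letters_subset: "(\<And>i. i < n \<Longrightarrow> C (int i) \<in> A) \<Longrightarrow> set (letters C n f) \<subseteq> A"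
  by (induction n) auto

lemma set_pbw_word: "set (pbw_word m p) \<subseteq> HL_letters m"
proof -
  have "set (letters Hb m h) \<subseteq> HL_letters m" "set (letters Lb m h) \<subseteq> HL_letters m" for h
    by (rule set_letters_subset, simp add: HL_letters_def)+
  then show ?thesis by (simp add: pbw_word_def)
qed

lemma subseq_replicate: "subseq ws (replicate a x) \<Longrightarrow> ws = replicate (length ws) x"
proof -
  assume "subseq ws (replicate a x)"
  then have "y = x" if "y \<in> set ws" for y
    using that by (rule list_emb_set) auto
  then show ?thesis by (simp add: replicate_length_same)
qed

lemma subseq_letters:
  assumes "subseq ws (letters C n f)"
  obtains g where "ws = letters C n g" and "\<forall>i\<ge>n. g i = 0"
  using assms
proof (induction n arbitrary: ws thesis)
  case 0
  then show ?case using "0.prems"(1)[of "\<lambda>_. 0"] by simp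
next
  case (Suc n)
  from Suc.prems(2) have "subseq ws (replicate (f n) (C (int n)) @ letters C n f)" by simp
  then obtain ws1 ws2 where ws: "ws = ws1 @ ws2"
    and ws1: "subseq ws1 (replicate (f n) (C (int n)))" and ws2: "subseq ws2 (letters C n f)"
    by (rule subseq_appendE)
  obtain g where g: "ws2 = letters C n g" "\<forall>i\<ge>n. g i = 0"
    using Suc.IH[OF _ ws2] by blast
  have "letters C n (g(n := length ws1)) = letters C n g"
    by (rule letters_cong) simp
  then have "ws = letters C (Suc n) (g(n := length ws1))"
    using ws g(1) subseq_replicate[OF ws1] by simp
  moreover have "\<forall>i\<ge>Suc n. (g(n := length ws1)) i = 0"
    using g(2) by simp
  ultimately show ?case by (rule Suc.prems(1))
qed

lemma subseq_pbw_word: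
  assumes "subseq ws (pbw_word m p)"
  obtains p' where "p' \<in> NM m \<times> NM m" and "ws = pbw_word m p'"
proof -
  from assms obtain ws1 ws2 where ws: "ws = ws1 @ ws2"
    and "subseq ws1 (letters Hb m (fst p))" "subseq ws2 (letters Lb m (snd p))"
    unfolding pbw_word_def by (rule subseq_appendE)
  then obtain h l where "ws1 = letters Hb m h" "\<forall>i\<ge>m. h i = 0"
    "ws2 = letters Lb m l" "\<forall>i\<ge>m. l i = 0"
    by (metis subseq_letters)
  with ws show ?thesis
    by (intro that[of "(h, l)"]) (auto simp: NM_def pbw_word_def)
qed

lemma word_weight_letters:
  "(\<And>i. mode (C i) = i) \<Longrightarrow> word_weight m (letters C n f) = (\<Sum>i<n. (int m - int i) * int (f i))"
  by (induction n) (simp_all add: word_weight_def sum_list_replicate algebra_simps)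

lemma int_wt: "int (wt m f) = (\<Sum>i<m. (int m - int i) * int (f i))"
  unfolding wt_def of_nat_sum by (rule sum.cong) (simp_all add: of_nat_diff)

section \<open>Weights and the degree order\<close>

definition pair_wt :: "nat \<Rightarrow> (nat \<Rightarrow> nat) \<times> (nat \<Rightarrow> nat) \<Rightarrow> nat" where
  "pair_wt m p = wt m (fst p) + wt m (snd p)"

lemma word_weight_pbw_word: "word_weight m (pbw_word m p) = int (pair_wt m p)"
  by (simp add: pbw_word_def pair_wt_def int_wt word_weight_letters)

lemma pairgt_iff:
  "pairgt m p q \<longleftrightarrow> pair_wt m q < pair_wt m p
     \<or> (pair_wt m q = pair_wt m p
        \<and> (lexgt m (snd p) (snd q) \<or> (snd p = snd q \<and> lexgt m (fst p) (fst q))))"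
  unfolding pairgt_def pair_wt_def by auto

lemma NM_fun_upd: "f \<in> NM m \<Longrightarrow> r < m \<Longrightarrow> f(r := a) \<in> NM m"
  unfolding NM_def by auto

lemma lower_eq_iff_raise: "f r \<noteq> 0 \<Longrightarrow> g = f(r := f r - 1) \<longleftrightarrow> f = g(r := Suc (g r))"
  by (auto simp: fun_eq_iff)

lemma raise_eq_iff_lower: "g(r := Suc (g r)) = f \<longleftrightarrow> f r \<noteq> 0 \<and> g = f(r := f r - 1)"
  by (auto simp: fun_eq_iff)

lemma wt_fun_upd:
  assumes "r < m"
  shows "wt m (f(r := a)) + (m - r) * f r = wt m f + (m - r) * a"
proof -
  have "wt m g = (m - r) * g r + (\<Sum>i\<in>{..<m} - {r}. (m - i) * g i)" for g
    unfolding wt_def using assms by (subst sum.remove[of _ r]) auto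
  from this[of f] this[of "f(r := a)"] show ?thesis by simp
qed

lemma wt_raise: "r < m \<Longrightarrow> wt m (f(r := Suc (f r))) = wt m f + (m - r)"
  using wt_fun_upd[of r m f "Suc (f r)"] by simp

lemma wt_lower: "r < m \<Longrightarrow> f r \<noteq> 0 \<Longrightarrow> wt m f = wt m (f(r := f r - 1)) + (m - r)"
  using wt_raise[of r m "f(r := f r - 1)"] by simp

lemma wt_zero [simp]: "wt m (\<lambda>_. 0) = 0"
  by (simp add: wt_def)

lemma wt_eq_0:
  assumes "f \<in> NM m" and "wt m f = 0"
  shows "f = (\<lambda>_. 0)"
proof
  fix i
  show "f i = 0"
  proof (cases "i < m")
    case True
    then have "(m - i) * f i \<le> wt m f"
      unfolding wt_def by (intro member_le_sum) auto
    with True assms(2) show ?thesis by simp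
  next
    case False
    with assms(1) show ?thesis by (simp add: NM_def)
  qed
qed

lemma wt_strict_mono:
  assumes "a \<in> NM m" and "b \<in> NM m" and le: "\<And>j. a j \<le> b j" and "a \<noteq> b"
  shows "wt m a < wt m b"
proof -
  obtain j where j: "a j \<noteq> b j"
    using \<open>a \<noteq> b\<close> by (metis ext)
  have "j < m"
  proof (rule ccontr)
    assume "\<not> j < m"
    with assms(1,2) j show False
      by (simp add: NM_def)
  qed
  with j le[of j] have "(m - j) * a j < (m - j) * b j"
    by simp
  with \<open>j < m\<close> show ?thesis
    unfolding wt_def using le by (intro sum_strict_mono_ex1) auto
qed

lemma not_lexgt_zero: "\<not> lexgt m (\<lambda>_. 0) b"
  unfolding lexgt_def by auto

lemma not_lexgt_raise: "\<not> lexgt m l (l(r := Suc (l r)))"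
  unfolding lexgt_def by auto

lemma lexgt_lower_self: "r < m \<Longrightarrow> l r \<noteq> 0 \<Longrightarrow> lexgt m l (l(r := l r - 1))"
  unfolding lexgt_def by (intro exI[of _ r]) auto

lemma lexgt_of_lexgt_raise:
  assumes "lexgt m a (b(r := Suc (b r)))"
  shows "lexgt m a b"
proof -
  from assms obtain t where t: "t < m" "(b(r := Suc (b r))) t < a t"
    "\<forall>s<t. a s = (b(r := Suc (b r))) s"
    unfolding lexgt_def by blast
  show ?thesis
  proof (cases "r < t")
    case True
    then show ?thesis using t unfolding lexgt_def by (intro exI[of _ r]) auto
  next
    case False
    then show ?thesis using t unfolding lexgt_def by (intro exI[of _ t]) (auto split: if_splits)
  qed
qed

lemma lexgt_lower_of_lexgt_raise:
  assumes "lexgt m h (g(r := Suc (g r)))"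
  shows "lexgt m (h(r := h r - 1)) g"
proof -
  from assms obtain t where t: "t < m" "(g(r := Suc (g r))) t < h t"
    "\<forall>s<t. h s = (g(r := Suc (g r))) s"
    unfolding lexgt_def by blast
  show ?thesis
  proof (cases "r = t")
    case True
    then show ?thesis using t unfolding lexgt_def by (intro exI[of _ r]) auto
  next
    case False
    then show ?thesis using t unfolding lexgt_def by (intro exI[of _ t]) (auto split: if_splits)
  qed
qed

lemma Max_support:
  assumes "l \<in> NM m" and "l \<noteq> (\<lambda>_. 0)"
  shows "Max {i. l i \<noteq> 0} < m" and "l (Max {i. l i \<noteq> 0}) \<noteq> 0"
    and "\<And>j. Max {i. l i \<noteq> 0} < j \<Longrightarrow> l j = 0"
proof -
  have sub: "{i. l i \<noteq> 0} \<subseteq> {..<m}"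
    using assms(1) not_less unfolding NM_def by blast
  then have fin: "finite {i. l i \<noteq> 0}"
    by (rule finite_subset) simp
  have "{i. l i \<noteq> 0} \<noteq> {}"
    using assms(2) by auto
  then show "Max {i. l i \<noteq> 0} < m" and "l (Max {i. l i \<noteq> 0}) \<noteq> 0"
    using Max_in[OF fin] sub by auto
  show "l j = 0" if "Max {i. l i \<noteq> 0} < j" for j
    using Max_ge[OF fin, of j] that by (cases "l j = 0") auto
qed

lemma lexgt_lower_Max:
  assumes l: "l \<in> NM m" "l \<noteq> (\<lambda>_. 0)" and l': "l' \<in> NM m"
    and s: "s = Max {i. l i \<noteq> 0}"
    and gt: "lexgt m l l'" and wt: "wt m l' + (m - s) \<le> wt m l"
    and ne: "l' \<noteq> l(s := l s - 1)"
  shows "lexgt m (l(s := l s - 1)) l'"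
proof -
  have s_lt: "s < m" using Max_support(1)[OF l, folded s] .
  have ls: "l s \<noteq> 0" using Max_support(2)[OF l, folded s] .
  have above: "l j = 0" if "s < j" for j using Max_support(3)[OF l, folded s] that .
  obtain t where t: "t < m" "l' t < l t" "\<forall>j<t. l j = l' j"
    using gt unfolding lexgt_def by auto
  have "t \<le> s"
  proof (rule ccontr)
    assume "\<not> t \<le> s"
    then have "l t = 0" using above by simp
    with t(2) show False by simp
  qed
  show ?thesis
  proof (cases "t < s")
    case True
    then show ?thesis using t unfolding lexgt_def by (intro exI[of _ t]) auto
  next
    case False
    with \<open>t \<le> s\<close> have ts: "t = s" by simp
    show ?thesis
    proof (cases "l' s < l s - 1")
      case True
      then show ?thesis using t ts unfolding lexgt_def by (intro exI[of _ s]) auto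
    next
      case False
      with t(2) ts have l's: "l' s = l s - 1" by simp
      let ?l0 = "l(s := l s - 1)"
      have le: "?l0 j \<le> l' j" for j
      proof (cases j s rule: linorder_cases)
        case less
        then show ?thesis using t(3) ts by simp
      next
        case equal
        then show ?thesis using l's by simp
      next
        case greater
        then show ?thesis using above[of j] by simp
      qed
      \<comment> \<open>So \<open>l'\<close> lies pointwise above \<open>?l0\<close> and differs from it: its weight is too large.\<close>
      have "wt m ?l0 < wt m l'"
        by (rule wt_strict_mono[OF NM_fun_upd[OF l(1) s_lt] l' le]) (use ne in auto)
      moreover have "wt m l = wt m ?l0 + (m - s)"
        using wt_lower[of s m l] s_lt ls by simp
      ultimately show ?thesis using wt by linarith
    qed
  qed
qed

lemma pairgt_lower_Max:
  assumes l: "l \<in> NM m" "l \<noteq> (\<lambda>_. 0)" and s: "s = Max {i. l i \<noteq> 0}"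
    and q: "q \<in> NM m \<times> NM m" and gt: "lexgt m l (snd q)"
    and wt: "wt m (fst q) + (m - s) + wt m (snd q) = wt m l"
    and ne: "q \<noteq> (\<lambda>_. 0, l(s := l s - 1))"
  shows "pairgt m (\<lambda>_. 0, l(s := l s - 1)) q"
proof -
  have s_lt: "s < m" and ls: "l s \<noteq> 0"
    using Max_support[OF l, folded s] by auto
  have wt_l: "wt m l = wt m (l(s := l s - 1)) + (m - s)"
    using wt_lower[of s m l] s_lt ls by simp
  \<comment> \<open>If \<open>snd q\<close> were \<open>l - \<epsilon>\<^sub>s\<close>, the weight count would force \<open>fst q = 0\<close>.\<close>
  have "snd q \<noteq> l(s := l s - 1)"
  proof
    assume snd_q: "snd q = l(s := l s - 1)"
    with wt wt_l have "wt m (fst q) = 0"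
      by simp
    with q have "fst q = (\<lambda>_. 0)"
      by (auto intro: wt_eq_0)
    with snd_q ne show False
      by (simp add: prod_eq_iff)
  qed
  with lexgt_lower_Max[OF l _ s gt] q wt wt_l have "lexgt m (l(s := l s - 1)) (snd q)"
    by auto
  moreover have "pair_wt m q = pair_wt m (\<lambda>_. 0, l(s := l s - 1))"
    using wt wt_l by (simp add: pair_wt_def)
  ultimately show ?thesis
    unfolding pairgt_iff by simp
qed

section \<open>PBW coefficients in the induced module\<close>

lemma (in vector_space) sum_scaled_preimage:
  assumes "finite S" and "{p. c p \<noteq> 0} \<subseteq> S"
    and "\<And>p. n p \<noteq> 0 \<Longrightarrow> q = f p \<longleftrightarrow> p = p0"
  shows "(\<Sum>p\<in>S. if q = f p then scale (of_nat (n p) * a) (c p) else 0)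
    = scale (of_nat (n p0) * a) (c p0)"
proof -
  have "(if q = f p then scale (of_nat (n p) * a) (c p) else 0)
      = (if p = p0 then scale (of_nat (n p0) * a) (c p0) else 0)" for p
    using assms(3)[of p] by (cases "n p = 0") auto
  then have "(\<Sum>p\<in>S. if q = f p then scale (of_nat (n p) * a) (c p) else 0)
      = (\<Sum>p\<in>S. if p = p0 then scale (of_nat (n p0) * a) (c p0) else 0)"
    by simp
  also have "\<dots> = scale (of_nat (n p0) * a) (c p0)"
    using assms(1,2) by (auto simp: sum.delta)
  finally show ?thesis .
qed

lemma monH_eq_foldr: "monH \<sigma> n h = foldr \<sigma> (letters Hb n h)"
  by (induction n) simp_all

lemma monL_eq_foldr: "monL \<sigma> n l = foldr \<sigma> (letters Lb n l)"
  by (induction n) simp_all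

locale pbw_module =
  fixes m :: nat
    and sV :: "complex \<Rightarrow> 'v::ab_group_add \<Rightarrow> 'v" and \<rho> :: "gb \<Rightarrow> 'v \<Rightarrow> 'v"
    and sW :: "complex \<Rightarrow> 'w::ab_group_add \<Rightarrow> 'w" and \<sigma> :: "gb \<Rightarrow> 'w \<Rightarrow> 'w"
    and \<iota> :: "'v \<Rightarrow> 'w"
  assumes vector_space_V: "vector_space sV"
    and induced: "induced_module m sV \<rho> sW \<sigma> \<iota>"
begin

lemma vector_space_W: "vector_space sW"
  using induced by (simp add: induced_module_def is_rep_def)

lemma linear_\<iota>: "Vector_Spaces.linear sV sW \<iota>"
  using induced by (simp add: induced_module_def)

lemma linear_\<sigma>: "in_G0 x \<Longrightarrow> Vector_Spaces.linear sW sW (\<sigma> x)"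
  using induced by (simp add: induced_module_def is_rep_def)

lemma \<sigma>_commutator:
  "in_G0 x \<Longrightarrow> in_G0 y \<Longrightarrow> \<sigma> x (\<sigma> y w) - \<sigma> y (\<sigma> x w) = brk_act sW \<sigma> x y w"
  using induced by (simp add: induced_module_def is_rep_def)

lemma \<iota>_\<rho>: "in_Gm0 m x \<Longrightarrow> \<iota> (\<rho> x u) = \<sigma> x (\<iota> u)"
  using induced by (simp add: induced_module_def)

sublocale V: vector_space sV
  by (rule vector_space_V)

sublocale W: vector_space sW
  by (rule vector_space_W)

sublocale VW: vector_space_pair sV sW
  by (intro vector_space_pair.intro vector_space_V vector_space_W)

sublocale WW: vector_space_pair sW sW
  by (intro vector_space_pair.intro vector_space_W)

lemma linear_foldr_\<sigma>: "set ws \<subseteq> HL_letters m \<Longrightarrow> Vector_Spaces.linear sW sW (foldr \<sigma> ws)"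
proof (induction ws)
  case Nil
  then show ?case by (simp add: W.linear_ident)
next
  case (Cons x ws)
  then have "Vector_Spaces.linear sW sW (\<sigma> x \<circ> foldr \<sigma> ws)"
    by (intro Vector_Spaces.linear_compose[of sW sW] linear_\<sigma> HL_letters_in_G0) auto
  then show ?case by (simp add: comp_def)
qed

definition word_vec :: "gb list \<Rightarrow> 'v \<Rightarrow> 'w" where
  "word_vec ws u = foldr \<sigma> ws (\<iota> u)"

lemma word_vec_Nil [simp]: "word_vec [] u = \<iota> u"
  and word_vec_Cons [simp]: "word_vec (x # ws) u = \<sigma> x (word_vec ws u)"
  and word_vec_append: "word_vec (xs @ ys) u = foldr \<sigma> xs (word_vec ys u)"
  by (simp_all add: word_vec_def)

lemma linear_word_vec: "set ws \<subseteq> HL_letters m \<Longrightarrow> Vector_Spaces.linear sV sW (word_vec ws)"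
proof -
  assume "set ws \<subseteq> HL_letters m"
  then have "Vector_Spaces.linear sV sW (foldr \<sigma> ws \<circ> \<iota>)"
    by (intro Vector_Spaces.linear_compose[of sV sW] linear_\<iota> linear_foldr_\<sigma>)
  moreover have "foldr \<sigma> ws \<circ> \<iota> = word_vec ws"
    by (simp add: fun_eq_iff word_vec_def)
  ultimately show ?thesis by simp
qed

lemmas word_vec_pbw_word_add = VW.linear_add[OF linear_word_vec[OF set_pbw_word]]
  and word_vec_pbw_word_scale = VW.linear_scale[OF linear_word_vec[OF set_pbw_word]]
  and word_vec_pbw_word_0 = VW.linear_0[OF linear_word_vec[OF set_pbw_word]]

definition subword_span :: "gb list \<Rightarrow> int \<Rightarrow> 'w set" where
  "subword_span ws d = W.span {word_vec ws' u | ws' u. subseq ws' ws \<and> word_weight m ws' \<le> d}"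

lemma word_vec_in_subword_span:
  "subseq ws' ws \<Longrightarrow> word_weight m ws' \<le> d \<Longrightarrow> word_vec ws' u \<in> subword_span ws d"
  unfolding subword_span_def by (rule W.span_base) blast

lemma subword_span_mono:
  "subseq ws ws' \<Longrightarrow> d \<le> d' \<Longrightarrow> subword_span ws d \<subseteq> subword_span ws' d'"
  unfolding subword_span_def by (rule W.span_mono) (auto intro: subseq_order.trans)

lemma subspace_subword_span: "W.subspace (subword_span ws d)"
  unfolding subword_span_def by (rule W.subspace_span)

lemma subword_span_weaken: "a \<in> subword_span ws d \<Longrightarrow> d \<le> d' \<Longrightarrow> a \<in> subword_span ws d'"
  using subword_span_mono[OF subseq_order.refl] by blast

lemma subword_span_Cons: "a \<in> subword_span ws d \<Longrightarrow> a \<in> subword_span (x # ws) d"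
  using subword_span_mono[OF list_emb_Cons[OF subseq_order.refl]] by blast

lemma \<sigma>_in_subword_span:
  assumes x: "x \<in> HL_letters m" and a: "a \<in> subword_span ws d"
  shows "\<sigma> x a \<in> subword_span (x # ws) (d + (int m - mode x))"
proof -
  let ?B = "{word_vec ws' u | ws' u. subseq ws' ws \<and> word_weight m ws' \<le> d}"
  have "\<sigma> x ` ?B \<subseteq> subword_span (x # ws) (d + (int m - mode x))"
    by (force intro: word_vec_in_subword_span[of "x # _", simplified])
  then have "W.span (\<sigma> x ` ?B) \<subseteq> subword_span (x # ws) (d + (int m - mode x))"
    unfolding subword_span_def by (intro W.span_minimal) auto
  moreover have "\<sigma> x a \<in> W.span (\<sigma> x ` ?B)"
    using a WW.linear_span_image[OF linear_\<sigma>[OF HL_letters_in_G0[OF x]]]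
    unfolding subword_span_def by blast
  ultimately show ?thesis by blast
qed

abbreviation coeff :: "'w \<Rightarrow> (nat \<Rightarrow> nat) \<times> (nat \<Rightarrow> nat) \<Rightarrow> 'v" where
  "coeff \<equiv> pbw_coeff \<sigma> \<iota> m"

lemma pbw_sum_eq_sum:
  assumes "finite F" and "{p. c p \<noteq> 0} \<subseteq> F"
  shows "pbw_sum \<sigma> \<iota> m c = (\<Sum>p\<in>F. word_vec (pbw_word m p) (c p))"
proof -
  have "mon \<sigma> m (fst p) (snd p) (\<iota> u) = word_vec (pbw_word m p) u" for p u
    by (simp add: mon_def monH_eq_foldr monL_eq_foldr word_vec_def pbw_word_def)
  then show ?thesis
    unfolding pbw_sum_def using assms
    by (auto intro!: sum.mono_neutral_left simp: word_vec_pbw_word_0)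
qed

lemma pbw_unique: "\<exists>!c. pbw_family m c \<and> w = pbw_sum \<sigma> \<iota> m c"
  using induced by (simp add: induced_module_def pbw_basis_def)

lemma coeff_spec: "pbw_family m (coeff w) \<and> w = pbw_sum \<sigma> \<iota> m (coeff w)"
  unfolding pbw_coeff_def using pbw_unique by (rule theI')

lemma coeff_pbw_sum: "pbw_family m c \<Longrightarrow> coeff (pbw_sum \<sigma> \<iota> m c) = c"
  unfolding pbw_coeff_def using pbw_unique by (rule the1_equality) simp

lemma pbw_expansion:
  shows "finite {p. coeff w p \<noteq> 0}" and "{p. coeff w p \<noteq> 0} \<subseteq> NM m \<times> NM m"
    and "w = (\<Sum>p | coeff w p \<noteq> 0. word_vec (pbw_word m p) (coeff w p))"
  using coeff_spec[of w] pbw_sum_eq_sum[of "{p. coeff w p \<noteq> 0}" "coeff w"]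
  by (auto simp: pbw_family_def)

lemma coeff_nonzero_NM: "coeff w q \<noteq> 0 \<Longrightarrow> q \<in> NM m \<times> NM m"
  using pbw_expansion(2) by blast

lemma coeff_sum_word_vec:
  assumes "finite F" and "F \<subseteq> NM m \<times> NM m"
  shows "coeff (\<Sum>p\<in>F. word_vec (pbw_word m p) (c p)) = (\<lambda>q. if q \<in> F then c q else 0)"
proof -
  let ?c = "\<lambda>q. if q \<in> F then c q else 0"
  have fam: "pbw_family m ?c"
    using assms unfolding pbw_family_def by (auto intro: finite_subset[of _ F])
  have sum: "pbw_sum \<sigma> \<iota> m ?c = (\<Sum>p\<in>F. word_vec (pbw_word m p) (c p))"
    by (subst pbw_sum_eq_sum[OF assms(1)]) auto
  show ?thesis
    using coeff_pbw_sum[OF fam] unfolding sum .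
qed

lemma coeff_word_vec:
  "p \<in> NM m \<times> NM m \<Longrightarrow> coeff (word_vec (pbw_word m p) u) = (\<lambda>q. if q = p then u else 0)"
  using coeff_sum_word_vec[of "{p}" "\<lambda>_. u"] by simp

lemma coeff_zero: "coeff 0 q = 0"
  using coeff_sum_word_vec[of "{}"] by simp

lemma coeff_add: "coeff (a + b) q = coeff a q + coeff b q"
proof -
  define F where "F = {p. coeff a p \<noteq> 0} \<union> {p. coeff b p \<noteq> 0}"
  have F: "finite F" "F \<subseteq> NM m \<times> NM m"
    unfolding F_def using pbw_expansion(1,2) by auto
  have "a + b = (\<Sum>p\<in>F. word_vec (pbw_word m p) (coeff a p + coeff b p))"
    using pbw_sum_eq_sum[OF F(1), of "coeff a"] pbw_sum_eq_sum[OF F(1), of "coeff b"]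
      coeff_spec[of a] coeff_spec[of b]
    by (simp add: F_def sum.distrib word_vec_pbw_word_add)
  then show ?thesis
    using coeff_sum_word_vec[OF F] by (auto simp: F_def)
qed

lemma coeff_scale: "coeff (sW c a) q = sV c (coeff a q)"
proof -
  define F where "F = {p. coeff a p \<noteq> 0}"
  have F: "finite F" "F \<subseteq> NM m \<times> NM m"
    unfolding F_def using pbw_expansion(1,2) by auto
  from pbw_expansion(3)[of a]
  have "sW c a = sW c (\<Sum>p\<in>F. word_vec (pbw_word m p) (coeff a p))"
    unfolding F_def by (rule arg_cong)
  also have "\<dots> = (\<Sum>p\<in>F. word_vec (pbw_word m p) (sV c (coeff a p)))"
    by (simp add: W.scale_sum_right word_vec_pbw_word_scale)
  finally show ?thesis
    using coeff_sum_word_vec[OF F] by (auto simp: F_def)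
qed

lemma coeff_minus: "coeff (- a) q = - coeff a q"
  using coeff_scale[of "-1" a] by simp

lemma coeff_diff: "coeff (a - b) q = coeff a q - coeff b q"
  using coeff_add[of a "- b" q] coeff_minus[of b q] by simp

lemma coeff_sum: "coeff (\<Sum>i\<in>A. f i) q = (\<Sum>i\<in>A. coeff (f i) q)"
  by (induction A rule: infinite_finite_induct) (simp_all add: coeff_zero coeff_add)

lemma coeff_subword_span:
  assumes "w \<in> subword_span (pbw_word m p) d" and "coeff w q \<noteq> 0"
  shows "int (pair_wt m q) \<le> d"
proof -
  let ?P = "\<lambda>w. \<forall>q. coeff w q \<noteq> 0 \<longrightarrow> int (pair_wt m q) \<le> d"
  have "?P 0"
    by (simp add: coeff_zero)
  moreover have "?P (x + y)" if "?P x" "?P y" for x y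
    using that by (metis add_0 coeff_add)
  moreover have "?P (sW c x)" if "?P x" for c x
    using that by (metis V.scale_zero_right coeff_scale)
  ultimately have subspace: "W.subspace (Collect ?P)"
    unfolding W.subspace_def by blast
  have generators: "?P (word_vec ws u)"
    if sub: "subseq ws (pbw_word m p)" and wt: "word_weight m ws \<le> d" for ws u
  proof -
    obtain p' where "p' \<in> NM m \<times> NM m" "ws = pbw_word m p'"
      using sub by (rule subseq_pbw_word)
    with wt show ?thesis
      by (simp add: coeff_word_vec word_weight_pbw_word)
  qed
  have "?P w"
    using W.span_induct[where P = ?P, OF assms(1)[unfolded subword_span_def] subspace]
      generators by blast
  with assms(2) show ?thesis by blast
qed

lemma has_deg_coeff_wt:
  assumes "has_deg \<sigma> \<iota> m v p" and "coeff v q \<noteq> 0"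
  shows "pair_wt m q \<le> pair_wt m p"
proof (cases "q = p")
  case False
  with assms have "pairgt m p q"
    unfolding has_deg_def by blast
  then show ?thesis
    unfolding pairgt_iff by auto
qed simp

lemma add_or_diff_nonzero:
  fixes x y :: 'v
  shows "x \<noteq> 0 \<Longrightarrow> x + y \<noteq> 0 \<or> x - y \<noteq> 0"
proof (rule ccontr)
  assume x: "x \<noteq> 0" and both: "\<not> (x + y \<noteq> 0 \<or> x - y \<noteq> 0)"
  have "sV 2 x = x + x"
    using V.scale_left_distrib[of 1 1 x] by simp
  also have "\<dots> = (x + y) + (x - y)"
    by (simp add: algebra_simps)
  finally have "sV 2 x = 0"
    using both by auto
  with x show False
    by simp
qed

end

section \<open>Commuting an eigen-current through a word\<close>

text \<open>The operators \<open>I\<close> (with \<open>\<epsilon> = 1\<close>, \<open>\<gamma> = \<alpha>\<close>) and \<open>J\<close> (with \<open>\<epsilon> = -1\<close>, \<open>\<gamma> = \<beta>\<close>)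
  are both instances of \<open>X\<close>.\<close>

locale eigen_current = pbw_module m sV \<rho> sW \<sigma> \<iota>
  for m and sV :: "complex \<Rightarrow> 'v::ab_group_add \<Rightarrow> 'v" and \<rho>
    and sW :: "complex \<Rightarrow> 'w::ab_group_add \<Rightarrow> 'w" and \<sigma> and \<iota> +
  fixes k :: int and X :: "int \<Rightarrow> gb" and \<epsilon> :: complex and \<gamma> :: "int \<Rightarrow> complex"
  assumes k_ge: "int m - 1 \<le> k"
    and X_in_G0: "0 \<le> b \<Longrightarrow> in_G0 (X b)"
    and X_in_Gm0: "0 \<le> b \<Longrightarrow> in_Gm0 m (X b)"
    and bracket_H_X: "brk_act sW \<sigma> (Hb i) (X b) w = sW \<epsilon> (\<sigma> (X (i + b)) w)"
    and bracket_L_X: "brk_act sW \<sigma> (Lb i) (X b) w = sW (of_int (b - i)) (\<sigma> (X (i + b)) w)"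
    and X_vanishes: "k < b \<Longrightarrow> \<rho> (X b) u = 0"
    and X_eigen: "r < m \<Longrightarrow> \<rho> (X (k - int r)) u = sV (\<gamma> (k - int r)) u"
begin

definition bracket_coeff :: "gb \<Rightarrow> int \<Rightarrow> complex" where
  "bracket_coeff x b = (case x of Hb i \<Rightarrow> \<epsilon> | Lb i \<Rightarrow> of_int (b - i) | _ \<Rightarrow> 0)"

lemma X_commute_letter:
  assumes x: "x \<in> HL_letters m" and b: "0 \<le> b"
  shows "\<sigma> (X b) (\<sigma> x w) = \<sigma> x (\<sigma> (X b) w) - sW (bracket_coeff x b) (\<sigma> (X (mode x + b)) w)"
proof -
  have "\<sigma> x (\<sigma> (X b) w) - \<sigma> (X b) (\<sigma> x w) = brk_act sW \<sigma> x (X b) w"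
    using \<sigma>_commutator[OF HL_letters_in_G0[OF x] X_in_G0[OF b]] .
  also have "\<dots> = sW (bracket_coeff x b) (\<sigma> (X (mode x + b)) w)"
    using x by (auto simp: HL_letters_def bracket_H_X bracket_L_X bracket_coeff_def)
  finally show ?thesis by (simp add: algebra_simps)
qed

lemma X_word_vec_above_k:
  "set ws \<subseteq> HL_letters m \<Longrightarrow> k < b \<Longrightarrow> \<sigma> (X b) (word_vec ws u) = 0"
proof (induction ws arbitrary: b)
  case Nil
  then have "0 \<le> b" using k_ge by linarith
  then have "\<sigma> (X b) (\<iota> u) = \<iota> (\<rho> (X b) u)"
    by (simp add: \<iota>_\<rho> X_in_Gm0)
  with Nil show ?case
    by (simp add: X_vanishes VW.linear_0[OF linear_\<iota>])
next
  case (Cons x ws)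
  have x: "x \<in> HL_letters m" and ws: "set ws \<subseteq> HL_letters m"
    using Cons.prems by auto
  have "0 \<le> b" and "k < mode x + b"
    using Cons.prems k_ge mode_HL_letters[OF x] by linarith+
  then show ?case
    using X_commute_letter[OF x] Cons.IH[OF ws] Cons.prems(2)
    by (simp add: WW.linear_0[OF linear_\<sigma>[OF HL_letters_in_G0[OF x]]])
qed

text \<open>\<open>contraction r ws u\<close> deletes one letter of mode \<open>r\<close> from \<open>ws\<close>, in all possible ways,
  weighted by the coefficient of its bracket with \<open>X (k - r)\<close>.\<close>

fun contraction :: "nat \<Rightarrow> gb list \<Rightarrow> 'v \<Rightarrow> 'w" where
  "contraction r [] u = 0"
| "contraction r (x # ws) u = \<sigma> x (contraction r ws u)
     + (if mode x = int r then sW (bracket_coeff x (k - int r)) (word_vec ws u) else 0)"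

definition centered :: "nat \<Rightarrow> 'w \<Rightarrow> 'w" where
  "centered r w = \<sigma> (X (k - int r)) w - sW (\<gamma> (k - int r)) w"

lemma centered_sum:
  assumes "r < m"
  shows "centered r (\<Sum>i\<in>A. f i) = (\<Sum>i\<in>A. centered r (f i))"
proof -
  have "0 \<le> k - int r" using assms k_ge by linarith
  then show ?thesis
    unfolding centered_def
    by (simp add: WW.linear_sum[OF linear_\<sigma>[OF X_in_G0]] W.scale_sum_right sum_subtractf)
qed

lemma contraction_in_subword_span:
  "set ws \<subseteq> HL_letters m \<Longrightarrow>
    contraction r ws u \<in> subword_span ws (word_weight m ws - (int m - int r))"
proof (induction ws)
  case Nil
  show ?case by (simp add: W.subspace_0[OF subspace_subword_span])
next
  case (Cons x ws)
  have x: "x \<in> HL_letters m" and ws: "set ws \<subseteq> HL_letters m"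
    using Cons.prems by auto
  let ?S = "subword_span (x # ws) (word_weight m (x # ws) - (int m - int r))"
  have "\<sigma> x (contraction r ws u) \<in> ?S"
    using \<sigma>_in_subword_span[OF x Cons.IH[OF ws]] by (simp add: algebra_simps)
  moreover have "sW c (word_vec ws u) \<in> ?S" if "mode x = int r" for c
    using that by (intro W.subspace_scale[OF subspace_subword_span] word_vec_in_subword_span)
      (auto intro: list_emb_Cons)
  ultimately show ?case
    by (simp add: W.subspace_add[OF subspace_subword_span] W.subspace_0[OF subspace_subword_span])
qed

lemma X_word_vec_in_subword_span:
  assumes r': "r' < m"
    and centered_ws: "centered r' (word_vec ws u) \<in> subword_span ws (word_weight m ws - (int m - int r'))"
  shows "\<sigma> (X (k - int r')) (word_vec ws u) \<in> subword_span ws (word_weight m ws)"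
proof -
  have "centered r' (word_vec ws u) \<in> subword_span ws (word_weight m ws)"
    by (rule subword_span_weaken[OF centered_ws]) (use r' in simp)
  moreover have "word_vec ws u \<in> subword_span ws (word_weight m ws)"
    by (rule word_vec_in_subword_span[OF subseq_order.refl order_refl])
  ultimately have "centered r' (word_vec ws u) + sW (\<gamma> (k - int r')) (word_vec ws u)
      \<in> subword_span ws (word_weight m ws)"
    by (intro W.subspace_add W.subspace_scale subspace_subword_span)
  then show ?thesis
    by (simp add: centered_def)
qed

lemma commutator_remainder_in_subword_span:
  assumes x: "x \<in> HL_letters m" and ws: "set ws \<subseteq> HL_letters m" and r: "r < m"
    and centered_ws: "\<And>r'. r' < m \<Longrightarrow>
      centered r' (word_vec ws u) \<in> subword_span ws (word_weight m ws - (int m - int r'))"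
  shows "(if mode x = int r then sW (\<gamma> k * bracket_coeff x (k - int r)) (word_vec ws u) else 0)
      - sW (bracket_coeff x (k - int r)) (\<sigma> (X (mode x + (k - int r))) (word_vec ws u))
    \<in> subword_span (x # ws) (word_weight m (x # ws) - (int m - int r) - 1)"
    (is "?Z \<in> ?S")
proof -
  define i where "i = mode x"
  define c where "c = bracket_coeff x (k - int r)"
  define w where "w = word_vec ws u"
  have i: "0 \<le> i" "i < int m" using mode_HL_letters[OF x] by (auto simp: i_def)
  have S: "W.subspace ?S" by (rule subspace_subword_span)
  show ?thesis
  proof (cases i "int r" rule: linorder_cases)
    case less
    \<comment> \<open>\<open>X (i + k - r)\<close> is again one of the eigen-operators, and deleting \<open>x\<close> costs more than \<open>m - r\<close>.\<close>
    define r' where "r' = r - nat i"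
    have r': "r' < m" "i + (k - int r) = k - int r'"
      using less i r by (auto simp: r'_def)
    have "\<sigma> (X (i + (k - int r))) w \<in> subword_span ws (word_weight m ws)"
      unfolding r'(2) w_def by (rule X_word_vec_in_subword_span[OF r'(1) centered_ws[OF r'(1)]])
    then have "\<sigma> (X (i + (k - int r))) w
        \<in> subword_span ws (word_weight m (x # ws) - (int m - int r) - 1)"
      by (rule subword_span_weaken) (use less in \<open>simp add: i_def\<close>)
    then have "\<sigma> (X (i + (k - int r))) w \<in> ?S"
      by (rule subword_span_Cons)
    then have "- sW c (\<sigma> (X (i + (k - int r))) w) \<in> ?S"
      by (intro W.subspace_neg[OF S] W.subspace_scale[OF S])
    with less show ?thesis
      by (simp add: i_def c_def w_def)
  next
    case equal
    have "?Z = - sW c (centered 0 w)"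
      using equal by (simp add: i_def c_def w_def centered_def W.scale_right_diff_distrib)
    moreover have "centered 0 w \<in> subword_span ws (word_weight m (x # ws) - (int m - int r) - 1)"
      by (rule subword_span_weaken[OF centered_ws[of 0, folded w_def]])
        (use r equal in \<open>auto simp: i_def\<close>)
    then have "centered 0 w \<in> ?S"
      by (rule subword_span_Cons)
    then have "- sW c (centered 0 w) \<in> ?S"
      by (intro W.subspace_neg[OF S] W.subspace_scale[OF S])
    ultimately show ?thesis
      by simp
  next
    case greater
    then have "\<sigma> (X (i + (k - int r))) w = 0"
      unfolding w_def by (intro X_word_vec_above_k[OF ws]) linarith
    with greater show ?thesis
      using W.subspace_0[OF S] by (simp add: i_def w_def)
  qed
qed

lemma centered_word_vec_remainder:
  assumes "set ws \<subseteq> HL_letters m" and "r < m"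
  shows "centered r (word_vec ws u) + sW (\<gamma> k) (contraction r ws u)
    \<in> subword_span ws (word_weight m ws - (int m - int r) - 1)"
  using assms
proof (induction ws arbitrary: r)
  case Nil
  have "0 \<le> k - int r" using Nil.prems k_ge by linarith
  then have "\<sigma> (X (k - int r)) (\<iota> u) = sW (\<gamma> (k - int r)) (\<iota> u)"
    using \<iota>_\<rho>[OF X_in_Gm0] X_eigen[OF Nil.prems(2)] VW.linear_scale[OF linear_\<iota>] by metis
  then show ?case
    by (simp add: centered_def W.subspace_0[OF subspace_subword_span])
next
  case (Cons x ws)
  have x: "x \<in> HL_letters m" and ws: "set ws \<subseteq> HL_letters m"
    using Cons.prems by auto
  define w where "w = word_vec ws u"
  define c where "c = bracket_coeff x (k - int r)"
  have lin: "Vector_Spaces.linear sW sW (\<sigma> x)"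
    by (rule linear_\<sigma>[OF HL_letters_in_G0[OF x]])
  have "centered r' w \<in> subword_span ws (word_weight m ws - (int m - int r'))" if "r' < m" for r'
  proof -
    have "centered r' w = (centered r' w + sW (\<gamma> k) (contraction r' ws u))
        - sW (\<gamma> k) (contraction r' ws u)"
      by simp
    also have "\<dots> \<in> subword_span ws (word_weight m ws - (int m - int r'))"
      using Cons.IH[OF ws that] contraction_in_subword_span[OF ws]
      by (intro W.subspace_diff W.subspace_scale subspace_subword_span)
        (auto simp: w_def elim: subword_span_weaken)
    finally show ?thesis .
  qed
  then have Z: "(if mode x = int r then sW (\<gamma> k * c) w else 0)
      - sW c (\<sigma> (X (mode x + (k - int r))) w)
    \<in> subword_span (x # ws) (word_weight m (x # ws) - (int m - int r) - 1)"
    unfolding c_def w_def by (intro commutator_remainder_in_subword_span[OF x ws Cons.prems(2)])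
      (simp add: w_def)
  have b: "0 \<le> k - int r" using Cons.prems(2) k_ge by linarith
  have "centered r (word_vec (x # ws) u) + sW (\<gamma> k) (contraction r (x # ws) u)
      = \<sigma> x (centered r w + sW (\<gamma> k) (contraction r ws u))
        + ((if mode x = int r then sW (\<gamma> k * c) w else 0)
           - sW c (\<sigma> (X (mode x + (k - int r))) w))"
    unfolding centered_def word_vec_Cons contraction.simps X_commute_letter[OF x b]
      w_def[symmetric] c_def[symmetric]
    by (cases "mode x = int r")
      (simp_all add: WW.linear_add[OF lin] WW.linear_diff[OF lin] WW.linear_scale[OF lin]
        W.scale_right_distrib algebra_simps)
  moreover have "\<sigma> x (centered r w + sW (\<gamma> k) (contraction r ws u))
      \<in> subword_span (x # ws) (word_weight m (x # ws) - (int m - int r) - 1)"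
    using \<sigma>_in_subword_span[OF x Cons.IH[OF ws Cons.prems(2)]] by (simp add: w_def algebra_simps)
  ultimately show ?case
    using W.subspace_add[OF subspace_subword_span _ Z] by simp
qed

lemma contraction_replicate:
  assumes x: "x \<in> HL_letters m"
  shows "contraction r (replicate a x @ ws) u = (\<sigma> x ^^ a) (contraction r ws u)
    + (if mode x = int r
       then sW (of_nat a * bracket_coeff x (k - int r)) (word_vec (replicate (a - 1) x @ ws) u)
       else 0)"
proof (induction a)
  case 0
  then show ?case by simp
next
  case (Suc a)
  have lin: "Vector_Spaces.linear sW sW (\<sigma> x)"
    by (rule linear_\<sigma>[OF HL_letters_in_G0[OF x]])
  have "\<sigma> x (word_vec (replicate (a - 1) x @ ws) u) = word_vec (replicate a x @ ws) u" if "a \<noteq> 0"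
    using that by (cases a) simp_all
  with Suc.IH show ?case
    by (cases "mode x = int r"; cases "a = 0")
      (simp_all add: WW.linear_add[OF lin] WW.linear_scale[OF lin] algebra_simps
        W.scale_left_distrib)
qed

lemma contraction_letters:
  assumes C: "\<And>i. mode (C i) = i" "\<And>i. 0 \<le> i \<Longrightarrow> i < int m \<Longrightarrow> C i \<in> HL_letters m"
    and "n \<le> m"
  shows "contraction r (letters C n f @ ws) u = foldr \<sigma> (letters C n f) (contraction r ws u)
    + (if r < n then sW (of_nat (f r) * bracket_coeff (C (int r)) (k - int r))
         (word_vec (letters C n (f(r := f r - 1)) @ ws) u) else 0)"
  using assms(3)
proof (induction n)
  case 0
  then show ?case by simp
next
  case (Suc n)
  let ?x = "C (int n)"
  have x: "?x \<in> HL_letters m"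
    using Suc.prems by (intro C(2)) auto
  have "set (replicate (f n) ?x) \<subseteq> HL_letters m"
    using x by auto
  from linear_foldr_\<sigma>[OF this] have lin: "Vector_Spaces.linear sW sW (\<sigma> ?x ^^ f n)"
    by simp
  have IH: "contraction r (letters C n f @ ws) u = foldr \<sigma> (letters C n f) (contraction r ws u)
    + (if r < n then sW (of_nat (f r) * bracket_coeff (C (int r)) (k - int r))
         (word_vec (letters C n (f(r := f r - 1)) @ ws) u) else 0)"
    using Suc by simp
  have split: "contraction r (letters C (Suc n) f @ ws) u
    = (\<sigma> ?x ^^ f n) (contraction r (letters C n f @ ws) u)
      + (if n = r then sW (of_nat (f n) * bracket_coeff ?x (k - int r))
           (word_vec (replicate (f n - 1) ?x @ letters C n f @ ws) u) else 0)"
    using contraction_replicate[OF x, of r "f n" "letters C n f @ ws" u] C(1) by simp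
  show ?case
  proof (cases "r = n")
    case True
    have "letters C n (f(n := f n - 1)) = letters C n f"
      by (rule letters_cong) simp
    then show ?thesis
      using split IH True by simp
  next
    case False
    have "(\<sigma> ?x ^^ f n) (word_vec (letters C n (f(r := f r - 1)) @ ws) u)
        = word_vec (letters C (Suc n) (f(r := f r - 1)) @ ws) u"
      using False by (simp add: word_vec_append)
    then show ?thesis
      using split IH False
      by (simp add: WW.linear_add[OF lin] WW.linear_scale[OF lin] WW.linear_0[OF lin])
  qed
qed

lemma contraction_pbw_word:
  assumes r: "r < m"
  shows "contraction r (pbw_word m (h, l)) u
    = sW (of_nat (h r) * \<epsilon>) (word_vec (pbw_word m (h(r := h r - 1), l)) u)
      + sW (of_nat (l r) * of_int (k - 2 * int r)) (word_vec (pbw_word m (h, l(r := l r - 1))) u)"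
proof -
  have H: "\<And>i. 0 \<le> i \<Longrightarrow> i < int m \<Longrightarrow> Hb i \<in> HL_letters m"
    and L: "\<And>i. 0 \<le> i \<Longrightarrow> i < int m \<Longrightarrow> Lb i \<in> HL_letters m"
    by (auto simp: HL_letters_def)
  have HL: "set (letters Hb m h) \<subseteq> HL_letters m" "set (letters Lb m l) \<subseteq> HL_letters m"
    by (auto intro!: set_letters_subset simp: HL_letters_def)
  have "contraction r (letters Lb m l @ []) u
      = sW (of_nat (l r) * of_int (k - 2 * int r)) (word_vec (letters Lb m (l(r := l r - 1))) u)"
    using contraction_letters[of Lb, OF _ L order_refl, of r l "[]" u] r
    by (simp add: WW.linear_0[OF linear_foldr_\<sigma>[OF HL(2)]] bracket_coeff_def)
  then show ?thesis
    using contraction_letters[of Hb, OF _ H order_refl, of r h "letters Lb m l" u] r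
    by (simp add: pbw_word_def bracket_coeff_def word_vec_append
        WW.linear_scale[OF linear_foldr_\<sigma>[OF HL(1)]] add.commute)
qed

section \<open>Degrees\<close>

lemma coeff_contraction_pbw_word:
  assumes r: "r < m" and p: "p \<in> NM m \<times> NM m"
  shows "coeff (contraction r (pbw_word m p) u) q
    = (if q = ((fst p)(r := fst p r - 1), snd p) then sV (of_nat (fst p r) * \<epsilon>) u else 0)
      + (if q = (fst p, (snd p)(r := snd p r - 1))
         then sV (of_nat (snd p r) * of_int (k - 2 * int r)) u else 0)"
proof -
  have "((fst p)(r := fst p r - 1), snd p) \<in> NM m \<times> NM m"
    and "(fst p, (snd p)(r := snd p r - 1)) \<in> NM m \<times> NM m"
    using p r by (auto simp: NM_fun_upd)
  then show ?thesis
    using contraction_pbw_word[OF r, of "fst p" "snd p" u]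
    by (simp add: coeff_add coeff_scale coeff_word_vec)
qed

lemma sum_coeff_contraction:
  assumes r: "r < m"
  shows "(\<Sum>p | coeff v p \<noteq> 0. coeff (contraction r (pbw_word m p) (coeff v p)) q)
    = sV (of_nat (Suc (fst q r)) * \<epsilon>) (coeff v ((fst q)(r := Suc (fst q r)), snd q))
      + sV (of_nat (Suc (snd q r)) * of_int (k - 2 * int r))
          (coeff v (fst q, (snd q)(r := Suc (snd q r))))"
proof -
  let ?S = "{p. coeff v p \<noteq> 0}"
  define A where "A p = (if q = ((fst p)(r := fst p r - 1), snd p)
    then sV (of_nat (fst p r) * \<epsilon>) (coeff v p) else 0)" for p
  define B where "B p = (if q = (fst p, (snd p)(r := snd p r - 1))
    then sV (of_nat (snd p r) * of_int (k - 2 * int r)) (coeff v p) else 0)" for p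
  have "q = ((fst p)(r := fst p r - 1), snd p) \<longleftrightarrow> p = ((fst q)(r := Suc (fst q r)), snd q)"
    if "fst p r \<noteq> 0" for p
    using that by (auto simp: prod_eq_iff lower_eq_iff_raise)
  from V.sum_scaled_preimage[OF pbw_expansion(1)[of v] subset_refl this]
  have sum_A: "(\<Sum>p\<in>?S. A p)
      = sV (of_nat (Suc (fst q r)) * \<epsilon>) (coeff v ((fst q)(r := Suc (fst q r)), snd q))"
    by (simp add: A_def)
  have "q = (fst p, (snd p)(r := snd p r - 1)) \<longleftrightarrow> p = (fst q, (snd q)(r := Suc (snd q r)))"
    if "snd p r \<noteq> 0" for p
    using that by (auto simp: prod_eq_iff lower_eq_iff_raise)
  from V.sum_scaled_preimage[OF pbw_expansion(1)[of v] subset_refl this]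
  have sum_B: "(\<Sum>p\<in>?S. B p) = sV (of_nat (Suc (snd q r)) * of_int (k - 2 * int r))
      (coeff v (fst q, (snd q)(r := Suc (snd q r))))"
    by (simp add: B_def)
  have "(\<Sum>p\<in>?S. coeff (contraction r (pbw_word m p) (coeff v p)) q) = (\<Sum>p\<in>?S. A p + B p)"
    using pbw_expansion(2)[of v] unfolding A_def B_def
    by (intro sum.cong refl coeff_contraction_pbw_word[OF r]) auto
  then show ?thesis
    by (simp add: sum.distrib sum_A sum_B)
qed

text \<open>The remainders in \<open>centered_word_vec_remainder\<close> lie below weight \<open>W - (m - r)\<close>,
  so at that weight only the contraction contributes.\<close>

lemma coeff_centered_top:
  assumes r: "r < m"
    and bound: "\<And>p. coeff v p \<noteq> 0 \<Longrightarrow> pair_wt m p \<le> W"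
    and q: "W \<le> pair_wt m q + (m - r)"
  shows "coeff (centered r v) q = - sV (\<gamma> k)
      (sV (of_nat (Suc (fst q r)) * \<epsilon>) (coeff v ((fst q)(r := Suc (fst q r)), snd q))
       + sV (of_nat (Suc (snd q r)) * of_int (k - 2 * int r))
           (coeff v (fst q, (snd q)(r := Suc (snd q r)))))"
proof -
  let ?S = "{p. coeff v p \<noteq> 0}"
  let ?c = "\<lambda>p. contraction r (pbw_word m p) (coeff v p)"
  define R where "R p = centered r (word_vec (pbw_word m p) (coeff v p)) + sW (\<gamma> k) (?c p)" for p
  have "centered r v = centered r (\<Sum>p\<in>?S. word_vec (pbw_word m p) (coeff v p))"
    using pbw_expansion(3)[of v] by (rule arg_cong)
  also have "\<dots> = (\<Sum>p\<in>?S. R p - sW (\<gamma> k) (?c p))"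
    by (simp add: centered_sum[OF r] R_def)
  finally have "coeff (centered r v) q
      = (\<Sum>p\<in>?S. coeff (R p) q) - sV (\<gamma> k) (\<Sum>p\<in>?S. coeff (?c p) q)"
    by (simp add: coeff_sum coeff_diff coeff_scale sum_subtractf V.scale_sum_right)
  moreover have "coeff (R p) q = 0" if "p \<in> ?S" for p
  proof (rule ccontr)
    assume "coeff (R p) q \<noteq> 0"
    moreover have "R p \<in> subword_span (pbw_word m p) (int (pair_wt m p) - (int m - int r) - 1)"
      unfolding R_def using centered_word_vec_remainder[OF set_pbw_word r]
      by (simp add: word_weight_pbw_word)
    ultimately have "int (pair_wt m q) \<le> int (pair_wt m p) - (int m - int r) - 1"
      by (intro coeff_subword_span)
    moreover have "pair_wt m p \<le> pair_wt m q + (m - r)"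
      using bound[of p] that q by simp
    moreover have "int (m - r) = int m - int r"
      using r by simp
    ultimately show False
      by linarith
  qed
  ultimately show ?thesis
    by (simp add: sum_coeff_contraction[OF r])
qed

lemma coeff_centered_support:
  assumes deg: "has_deg \<sigma> \<iota> m v p0" and r: "r < m" and nz: "coeff (centered r v) q \<noteq> 0"
  shows "pair_wt m q + (m - r) < pair_wt m p0
    \<or> pair_wt m q + (m - r) = pair_wt m p0
      \<and> (coeff v ((fst q)(r := Suc (fst q r)), snd q) \<noteq> 0
         \<or> coeff v (fst q, (snd q)(r := Suc (snd q r))) \<noteq> 0)"
proof (cases "pair_wt m q + (m - r) < pair_wt m p0")
  case False
  let ?pH = "((fst q)(r := Suc (fst q r)), snd q)"
  let ?pL = "(fst q, (snd q)(r := Suc (snd q r)))"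
  from False have top: "pair_wt m p0 \<le> pair_wt m q + (m - r)"
    by simp
  have bound: "\<And>p. coeff v p \<noteq> 0 \<Longrightarrow> pair_wt m p \<le> pair_wt m p0"
    by (rule has_deg_coeff_wt[OF deg])
  have "coeff v ((fst q)(r := Suc (fst q r)), snd q) \<noteq> 0
      \<or> coeff v (fst q, (snd q)(r := Suc (snd q r))) \<noteq> 0"
    using nz coeff_centered_top[OF r bound top] by auto
  moreover have "pair_wt m ?pH = pair_wt m q + (m - r)" "pair_wt m ?pL = pair_wt m q + (m - r)"
    using r by (simp_all add: pair_wt_def wt_raise)
  ultimately have "pair_wt m q + (m - r) \<le> pair_wt m p0"
    using bound[of ?pH] bound[of ?pL] by auto
  moreover note \<open>coeff v ?pH \<noteq> 0 \<or> coeff v ?pL \<noteq> 0\<close>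
  ultimately show ?thesis
    using top by simp
qed simp

lemma centered_dominated_H:
  assumes deg: "has_deg \<sigma> \<iota> m v (h, l)" and hr: "h r \<noteq> 0" and r: "r < m"
    and nz: "coeff (centered r v) q \<noteq> 0" and ne: "q \<noteq> (h(r := h r - 1), l)"
  shows "pairgt m (h(r := h r - 1), l) q"
proof -
  let ?q0 = "(h(r := h r - 1), l)"
  let ?pH = "((fst q)(r := Suc (fst q r)), snd q)"
  let ?pL = "(fst q, (snd q)(r := Suc (snd q r)))"
  have dom: "\<And>p. coeff v p \<noteq> 0 \<Longrightarrow> p \<noteq> (h, l) \<Longrightarrow> pairgt m (h, l) p"
    using deg unfolding has_deg_def by auto
  have wt_q0: "pair_wt m ?q0 + (m - r) = pair_wt m (h, l)"
    using wt_lower[of r m h] r hr by (simp add: pair_wt_def)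
  have wt_raised: "pair_wt m ?pH = pair_wt m q + (m - r)" "pair_wt m ?pL = pair_wt m q + (m - r)"
    using r by (simp_all add: pair_wt_def wt_raise)
  from coeff_centered_support[OF deg r nz] consider
      (low) "pair_wt m q + (m - r) < pair_wt m (h, l)"
    | (H) "pair_wt m q + (m - r) = pair_wt m (h, l)" "coeff v ?pH \<noteq> 0"
    | (L) "pair_wt m q + (m - r) = pair_wt m (h, l)" "coeff v ?pL \<noteq> 0"
    by blast
  then show ?thesis
  proof cases
    case low
    with wt_q0 show ?thesis unfolding pairgt_iff by simp
  next
    case H
    have "?pH \<noteq> (h, l)"
      using ne by (auto simp: prod_eq_iff raise_eq_iff_lower)
    with dom[OF H(2)] H(1) wt_raised
    have "lexgt m l (snd q) \<or> (snd q = l \<and> lexgt m h ((fst q)(r := Suc (fst q r))))"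
      unfolding pairgt_iff by auto
    with H(1) wt_q0 show ?thesis
      unfolding pairgt_iff by (auto dest: lexgt_lower_of_lexgt_raise)
  next
    case L
    have "lexgt m l (snd q)"
    proof (cases "(snd q)(r := Suc (snd q r)) = l")
      case True
      then show ?thesis
        using r lexgt_lower_self[of r m l] by (auto simp: raise_eq_iff_lower)
    next
      case False
      with dom[OF L(2)] L(1) wt_raised show ?thesis
        unfolding pairgt_iff by (auto intro: lexgt_of_lexgt_raise)
    qed
    with L(1) wt_q0 show ?thesis
      unfolding pairgt_iff by simp
  qed
qed

lemma has_deg_centered_H:
  assumes deg: "has_deg \<sigma> \<iota> m v (h, l)" and hr: "h r \<noteq> 0"
    and \<epsilon>: "\<epsilon> \<noteq> 0" and \<gamma>: "\<gamma> k \<noteq> 0"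
  shows "has_deg \<sigma> \<iota> m (centered r v) (h(r := h r - 1), l)"
proof -
  have c0: "coeff v (h, l) \<noteq> 0"
    and dom: "\<And>p. coeff v p \<noteq> 0 \<Longrightarrow> p \<noteq> (h, l) \<Longrightarrow> pairgt m (h, l) p"
    using deg unfolding has_deg_def by auto
  have r: "r < m"
    using coeff_nonzero_NM[OF c0] hr not_less unfolding NM_def by blast
  have bound: "\<And>p. coeff v p \<noteq> 0 \<Longrightarrow> pair_wt m p \<le> pair_wt m (h, l)"
    by (rule has_deg_coeff_wt[OF deg])
  have wt: "pair_wt m (h(r := h r - 1), l(r := Suc (l r))) = pair_wt m (h, l)"
    using wt_lower[of r m h] wt_raise[of r m l] r hr by (simp add: pair_wt_def)
  \<comment> \<open>Trading one \<open>H r\<close> for an \<open>L r\<close> keeps the weight and raises the degree.\<close>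
  have "coeff v (h(r := h r - 1), l(r := Suc (l r))) = 0"
  proof (rule ccontr)
    assume nz: "coeff v (h(r := h r - 1), l(r := Suc (l r))) \<noteq> 0"
    have "l(r := Suc (l r)) \<noteq> l"
      by (metis fun_upd_same n_not_Suc_n)
    with dom[OF nz] wt have "lexgt m l (l(r := Suc (l r)))"
      unfolding pairgt_iff by auto
    with not_lexgt_raise show False by blast
  qed
  then have "coeff (centered r v) (h(r := h r - 1), l)
      = - sV (\<gamma> k) (sV (of_nat (h r) * \<epsilon>) (coeff v (h, l)))"
    using coeff_centered_top[OF r bound, where q = "(h(r := h r - 1), l)"]
      wt_lower[of r m h] r hr
    by (simp add: pair_wt_def)
  with c0 hr \<epsilon> \<gamma> have "coeff (centered r v) (h(r := h r - 1), l) \<noteq> 0"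
    by simp
  with centered_dominated_H[OF deg hr r] show ?thesis
    unfolding has_deg_def by blast
qed

lemma centered_dominated_L:
  assumes deg: "has_deg \<sigma> \<iota> m v (\<lambda>_. 0, l)" and l: "l \<noteq> (\<lambda>_. 0)"
    and s: "s = Max {i. l i \<noteq> 0}"
    and nz: "coeff (centered s v) q \<noteq> 0" and ne: "q \<noteq> (\<lambda>_. 0, l(s := l s - 1))"
  shows "pairgt m (\<lambda>_. 0, l(s := l s - 1)) q"
proof -
  let ?q0 = "(\<lambda>_. 0 :: nat, l(s := l s - 1))"
  let ?pH = "((fst q)(s := Suc (fst q s)), snd q)"
  let ?pL = "(fst q, (snd q)(s := Suc (snd q s)))"
  have c0: "coeff v (\<lambda>_. 0, l) \<noteq> 0"
    and dom: "\<And>p. coeff v p \<noteq> 0 \<Longrightarrow> p \<noteq> (\<lambda>_. 0, l) \<Longrightarrow> pairgt m (\<lambda>_. 0, l) p"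
    using deg unfolding has_deg_def by auto
  have lNM: "l \<in> NM m"
    using coeff_nonzero_NM[OF c0] by simp
  have s_lt: "s < m" and ls: "l s \<noteq> 0"
    using Max_support[OF lNM l, folded s] by auto
  have wt_q0: "pair_wt m ?q0 + (m - s) = pair_wt m (\<lambda>_. 0, l)"
    using wt_lower[of s m l] s_lt ls by (simp add: pair_wt_def)
  have wt_raised: "pair_wt m ?pH = pair_wt m q + (m - s)" "pair_wt m ?pL = pair_wt m q + (m - s)"
    using s_lt by (simp_all add: pair_wt_def wt_raise)
  from coeff_centered_support[OF deg s_lt nz] consider
      (low) "pair_wt m q + (m - s) < pair_wt m (\<lambda>_. 0, l)"
    | (H) "pair_wt m q + (m - s) = pair_wt m (\<lambda>_. 0, l)" "coeff v ?pH \<noteq> 0"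
    | (L) "pair_wt m q + (m - s) = pair_wt m (\<lambda>_. 0, l)" "coeff v ?pL \<noteq> 0"
    by blast
  then show ?thesis
  proof cases
    case low
    with wt_q0 show ?thesis unfolding pairgt_iff by simp
  next
    case H
    have "?pH \<noteq> (\<lambda>_. 0, l)"
      by (metis fst_conv fun_upd_same nat.distinct(1))
    with dom[OF H(2)] H(1) wt_raised have "lexgt m l (snd q)"
      unfolding pairgt_iff by (auto simp: not_lexgt_zero)
    moreover have "wt m (fst q) + (m - s) + wt m (snd q) = wt m l"
      using H(1) by (simp add: pair_wt_def)
    ultimately show ?thesis
      using pairgt_lower_Max[OF lNM l s coeff_nonzero_NM[OF nz] _ _ ne] by simp
  next
    case L
    have "?pL \<noteq> (\<lambda>_. 0, l)"
      using ne by (auto simp: prod_eq_iff raise_eq_iff_lower)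
    with dom[OF L(2)] L(1) wt_raised have "lexgt m l ((snd q)(s := Suc (snd q s)))"
      unfolding pairgt_iff by (auto simp: not_lexgt_zero)
    then have "lexgt m (l(s := l s - 1)) (snd q)"
      by (rule lexgt_lower_of_lexgt_raise)
    with L(1) wt_q0 show ?thesis
      unfolding pairgt_iff by simp
  qed
qed

lemma has_deg_centered_L_iff:
  assumes deg: "has_deg \<sigma> \<iota> m v (\<lambda>_. 0, l)" and l: "l \<noteq> (\<lambda>_. 0)"
    and s: "s = Max {i. l i \<noteq> 0}" and \<gamma>: "\<gamma> k \<noteq> 0"
  shows "has_deg \<sigma> \<iota> m (centered s v) (\<lambda>_. 0, l(s := l s - 1))
    \<longleftrightarrow> sV \<epsilon> (coeff v ((\<lambda>_. 0)(s := 1), l(s := l s - 1)))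
        + sV (of_nat (l s) * of_int (k - 2 * int s)) (coeff v (\<lambda>_. 0, l)) \<noteq> 0"
proof -
  have c0: "coeff v (\<lambda>_. 0, l) \<noteq> 0"
    using deg unfolding has_deg_def by blast
  have bound: "\<And>p. coeff v p \<noteq> 0 \<Longrightarrow> pair_wt m p \<le> pair_wt m (\<lambda>_. 0, l)"
    by (rule has_deg_coeff_wt[OF deg])
  have lNM: "l \<in> NM m"
    using coeff_nonzero_NM[OF c0] by simp
  have s_lt: "s < m" and ls: "0 < l s"
    using Max_support[OF lNM l, folded s] by auto
  have "coeff (centered s v) (\<lambda>_. 0, l(s := l s - 1)) = - sV (\<gamma> k)
      (sV \<epsilon> (coeff v ((\<lambda>_. 0)(s := 1), l(s := l s - 1)))
       + sV (of_nat (l s) * of_int (k - 2 * int s)) (coeff v (\<lambda>_. 0, l)))"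
    using coeff_centered_top[OF s_lt bound, where q = "(\<lambda>_. 0, l(s := l s - 1))"]
      wt_lower[of s m l] s_lt ls
    by (simp add: pair_wt_def)
  with \<gamma> centered_dominated_L[OF deg l s] show ?thesis
    unfolding has_deg_def by auto
qed

end

lemma (in pbw_module) has_deg_I_or_J:
  assumes I: "eigen_current m sV \<rho> sW \<sigma> \<iota> k Ib 1 \<alpha>"
    and J: "eigen_current m sV \<rho> sW \<sigma> \<iota> k Jb (- 1) \<beta>"
    and k: "odd k" and \<alpha>: "\<alpha> k \<noteq> 0" and \<beta>: "\<beta> k \<noteq> 0"
    and deg: "has_deg \<sigma> \<iota> m v (\<lambda>_. 0, l)" and l: "l \<noteq> (\<lambda>_. 0)"
    and s: "s = Max {i. l i \<noteq> 0}"
  shows "has_deg \<sigma> \<iota> m (\<sigma> (Ib (k - int s)) v - sW (\<alpha> (k - int s)) v) (\<lambda>_. 0, l(s := l s - 1))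
    \<or> has_deg \<sigma> \<iota> m (\<sigma> (Jb (k - int s)) v - sW (\<beta> (k - int s)) v) (\<lambda>_. 0, l(s := l s - 1))"
proof -
  interpret I: eigen_current m sV \<rho> sW \<sigma> \<iota> k Ib 1 \<alpha> by (rule I)
  interpret J: eigen_current m sV \<rho> sW \<sigma> \<iota> k Jb "- 1" \<beta> by (rule J)
  let ?c1 = "coeff v ((\<lambda>_. 0)(s := 1), l(s := l s - 1))"
  let ?x = "sV (of_nat (l s) * of_int (k - 2 * int s)) (coeff v (\<lambda>_. 0, l))"
  have c0: "coeff v (\<lambda>_. 0, l) \<noteq> 0"
    using deg unfolding has_deg_def by blast
  have "l \<in> NM m"
    using coeff_nonzero_NM[OF c0] by simp
  then have "l s \<noteq> 0"
    using Max_support(2)[OF _ l] by (simp add: s)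
  moreover have "(of_int (k - 2 * int s) :: complex) \<noteq> 0"
    using k by (simp only: of_int_eq_0_iff) auto
  ultimately have "?x \<noteq> 0"
    using c0 by (simp only: V.scale_eq_0_iff mult_eq_0_iff of_nat_eq_0_iff) blast
  \<comment> \<open>The two top coefficients are \<open>c\<^sub>1 + x\<close> for \<open>I\<close> and \<open>x - c\<^sub>1\<close> for \<open>J\<close>.\<close>
  then have "sV 1 ?c1 + ?x \<noteq> 0 \<or> sV (- 1) ?c1 + ?x \<noteq> 0"
    using add_or_diff_nonzero[of ?x ?c1] by (simp add: add.commute)
  then show ?thesis
    using I.has_deg_centered_L_iff[OF deg l s \<alpha>] J.has_deg_centered_L_iff[OF deg l s \<beta>]
    by (simp add: I.centered_def J.centered_def)
qed

theorem lemma3p6: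
  fixes m :: nat and k :: int
    and sV :: "complex \<Rightarrow> 'v::ab_group_add \<Rightarrow> 'v" and \<rho> :: "gb \<Rightarrow> 'v \<Rightarrow> 'v"
    and sW :: "complex \<Rightarrow> 'w::ab_group_add \<Rightarrow> 'w" and \<sigma> :: "gb \<Rightarrow> 'w \<Rightarrow> 'w"
    and \<iota> :: "'v \<Rightarrow> 'w"
    and \<alpha> \<beta> :: "int \<Rightarrow> complex"
    and v :: 'w and h l :: "nat \<Rightarrow> nat"
  assumes m_pos: "m > 0"
    and irr: "irreducible_rep sV (in_Gm0 m) \<rho>"
    and k_odd: "odd k" and k_ge: "k \<ge> int m - 1"
    and vanish: "\<forall>j>0. \<forall>u. \<rho> (Lb (k + j)) u = 0 \<and> \<rho> (Hb (k + j)) u = 0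
                         \<and> \<rho> (Ib (k + j)) u = 0 \<and> \<rho> (Jb (k + j)) u = 0"
    and eig: "\<forall>i<m. \<forall>u. \<rho> (Ib (k - int i)) u = sV (\<alpha> (k - int i)) u
                        \<and> \<rho> (Jb (k - int i)) u = sV (\<beta> (k - int i)) u"
    and nondeg: "\<alpha> k * \<beta> k \<noteq> 0"
    and ind: "induced_module m sV \<rho> sW \<sigma> \<iota>"
    and v_notin: "v \<notin> range \<iota>"
    and deg_v: "has_deg \<sigma> \<iota> m v (h, l)"
  shows "(h \<noteq> (\<lambda>_. 0) \<longrightarrow>
            (let r = (LEAST i. h i \<noteq> 0) in
               has_deg \<sigma> \<iota> m (\<sigma> (Ib (k - int r)) v - sW (\<alpha> (k - int r)) v)
                 (h(r := h r - 1), l)))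
       \<and> (h = (\<lambda>_. 0) \<and> l \<noteq> (\<lambda>_. 0) \<longrightarrow>
            (let s = Max {i. l i \<noteq> 0} in
               has_deg \<sigma> \<iota> m (\<sigma> (Ib (k - int s)) v - sW (\<alpha> (k - int s)) v)
                 (\<lambda>_. 0, l(s := l s - 1))
             \<or> has_deg \<sigma> \<iota> m (\<sigma> (Jb (k - int s)) v - sW (\<beta> (k - int s)) v)
                 (\<lambda>_. 0, l(s := l s - 1))))"
proof -
  have "vector_space sV"
    using irr unfolding irreducible_rep_def is_rep_def by blast
  then have pbw: "pbw_module m sV \<rho> sW \<sigma> \<iota>"
    using ind by (rule pbw_module.intro)
  then interpret pbw_module m sV \<rho> sW \<sigma> \<iota> .
  \<comment> \<open>Irreducibility only provides the vector space structure of \<open>V\<close>; \<open>m > 0\<close> and \<open>v \<notin> V\<close>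
    are not needed, since each case already assumes \<open>(h, l) \<noteq> 0\<close>.\<close>
  have above_k: "\<rho> (Ib b) u = 0 \<and> \<rho> (Jb b) u = 0" if "k < b" for b u
    using vanish[rule_format, of "b - k"] that by simp
  have I: "eigen_current m sV \<rho> sW \<sigma> \<iota> k Ib 1 \<alpha>" and J: "eigen_current m sV \<rho> sW \<sigma> \<iota> k Jb (- 1) \<beta>"
    using k_ge above_k eig
    by (intro eigen_current.intro[OF pbw] eigen_current_axioms.intro; simp)+
  have \<alpha>: "\<alpha> k \<noteq> 0" and \<beta>: "\<beta> k \<noteq> 0"
    using nondeg by auto
  have "has_deg \<sigma> \<iota> m (\<sigma> (Ib (k - int r)) v - sW (\<alpha> (k - int r)) v) (h(r := h r - 1), l)"
    if "h r \<noteq> 0" for r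
    using eigen_current.has_deg_centered_H[OF I deg_v that _ \<alpha>]
    by (simp add: eigen_current.centered_def[OF I])
  moreover have "h (LEAST i. h i \<noteq> 0) \<noteq> 0" if "h \<noteq> (\<lambda>_. 0)"
    using that by (metis (mono_tags, lifting) LeastI)
  moreover have "has_deg \<sigma> \<iota> m v (\<lambda>_. 0, l)" if "h = (\<lambda>_. 0)"
    using deg_v that by simp
  ultimately show ?thesis
    using has_deg_I_or_J[OF I J k_odd \<alpha> \<beta>] unfolding Let_def by blast
qed

end
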